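(* Let $m$ and $n_1,\ldots,n_t$ be positive integers such that for every $1\leq i\leq t$, $n_i$ is even and $m\geq n_i\geq 2 \lceil \log (81^{t-1}m)\rceil+1$. Then $BR(C_{n_1},\ldots,C_{n_t},K_{m,m})\leq 81^{t}m$.
   Context: $C_k$ is the cycle on $k$ vertices and $K_{m,m}$ the complete bipartite graph with both parts of size $m$. For bipartite graphs $G_1,\ldots,G_k$, the bipartite Ramsey number $BR(G_1,\ldots,G_k)$ is the smallest integer $b$ such that for every coloring of the edges of $K_{b,b}$ with colors $1,\ldots,k$ there is, for some $i$, a copy of $G_i$ all of whose edges have color $i$. $\log$ denotes the logarithm to base $2$. *)

theory Defs
  imports Complex_Main
begin

text \<open>The complete bipartite graph K_{b,b}: vertices Inl x (left part) and Inr y (right part)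
  with x, y < b.  An edge coloring is a function c with c x y the color of the edge
  between Inl x and Inr y.  Colors are 0..t-1 (the cycles) and t (the K_{m,m}).\<close>

definition col_adj :: "(nat \<Rightarrow> nat \<Rightarrow> nat) \<Rightarrow> nat \<Rightarrow> nat \<Rightarrow> nat + nat \<Rightarrow> nat + nat \<Rightarrow> bool" where
  "col_adj c b k u v =
     (case (u, v) of
        (Inl x, Inr y) \<Rightarrow> x < b \<and> y < b \<and> c x y = k
      | (Inr y, Inl x) \<Rightarrow> x < b \<and> y < b \<and> c x y = k
      | _ \<Rightarrow> False)"

definition has_mono_cycle :: "(nat \<Rightarrow> nat \<Rightarrow> nat) \<Rightarrow> nat \<Rightarrow> nat \<Rightarrow> nat \<Rightarrow> bool" where
  "has_mono_cycle c b k n =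
     (n \<ge> 3 \<and> (\<exists>f :: nat \<Rightarrow> nat + nat. inj_on f {..<n} \<and>
        (\<forall>j<n. col_adj c b k (f j) (f (Suc j mod n)))))"

definition has_mono_Kmm :: "(nat \<Rightarrow> nat \<Rightarrow> nat) \<Rightarrow> nat \<Rightarrow> nat \<Rightarrow> nat \<Rightarrow> bool" where
  "has_mono_Kmm c b k m =
     (\<exists>A B. A \<subseteq> {..<b} \<and> B \<subseteq> {..<b} \<and> card A = m \<and> card B = m \<and>
        (\<forall>x\<in>A. \<forall>y\<in>B. c x y = k))"

definition BR_arrows :: "nat \<Rightarrow> (nat \<Rightarrow> nat) \<Rightarrow> nat \<Rightarrow> nat \<Rightarrow> bool" where
  "BR_arrows t n m b =
     (\<forall>c :: nat \<Rightarrow> nat \<Rightarrow> nat. (\<forall>x<b. \<forall>y<b. c x y \<le> t) \<longrightarrow>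
        (\<exists>i<t. has_mono_cycle c b i (n i)) \<or> has_mono_Kmm c b t m)"

definition BR_cycles_Kmm :: "nat \<Rightarrow> (nat \<Rightarrow> nat) \<Rightarrow> nat \<Rightarrow> nat" where
  "BR_cycles_Kmm t n m = (LEAST b. BR_arrows t n m b)"

end

theory Submission
  imports Defs
begin

text \<open>Suppose all edges between two sets of 81M vertices have colour at least s. Either some
  M-subsets of the two sides span no edge of colour s, and we pass to them with colours at least
  s + 1, or the colour-s graph is M-dense: any M vertices on one side and M on the other are
  joined by an edge. In the dense case, after removing fewer than 2M vertices the graph expands
  eightfold on sets of at most M vertices, so from the two ends of an edge grow two disjoint trees
  with M leaves each and depth at most k - 1, as M \<le> 2^(k-1). A depth-first search among the
  remaining vertices finds a path of length about 70M, and by density a segment of it of the right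
  odd length joins a leaf of one tree to a leaf of the other: a cycle of length exactly 2k.
  Starting from 81^t m vertices, after t rounds we are left with m \<times> m sets of colour t.\<close>

section \<open>Dense bipartite graphs\<close>

definition bipartite :: "('v \<Rightarrow> 'v \<Rightarrow> bool) \<Rightarrow> 'v set \<Rightarrow> 'v set \<Rightarrow> bool" where
  "bipartite adj P Q \<longleftrightarrow> P \<inter> Q = {} \<and> (\<forall>u v. adj u v \<longrightarrow> adj v u) \<and>
     (\<forall>u v. adj u v \<longrightarrow> u \<in> P \<and> v \<in> Q \<or> u \<in> Q \<and> v \<in> P)"

definition dense_between :: "('v \<Rightarrow> 'v \<Rightarrow> bool) \<Rightarrow> nat \<Rightarrow> 'v set \<Rightarrow> 'v set \<Rightarrow> bool" where
  "dense_between adj M P Q \<longleftrightarrow> (\<forall>A B. A \<subseteq> P \<longrightarrow> B \<subseteq> Q \<longrightarrow> M \<le> card A \<longrightarrow> M \<le> card B \<longrightarrow>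
      (\<exists>a\<in>A. \<exists>b\<in>B. adj a b))"

definition neighbours :: "('v \<Rightarrow> 'v \<Rightarrow> bool) \<Rightarrow> 'v set \<Rightarrow> 'v set" where
  "neighbours adj S = {v. \<exists>u\<in>S. adj u v}"

lemma bipartite_swap: "bipartite adj P Q \<Longrightarrow> bipartite adj Q P"
  unfolding bipartite_def by blast

lemma dense_between_swap:
  "bipartite adj P Q \<Longrightarrow> dense_between adj M P Q \<Longrightarrow> dense_between adj M Q P"
  unfolding bipartite_def dense_between_def by metis

lemma dense_between_no_edges:
  assumes "dense_between adj M P Q" "A \<subseteq> P" "B \<subseteq> Q" "\<forall>a\<in>A. \<forall>b\<in>B. \<not> adj a b"
  shows "card A < M \<or> card B < M"
proof (rule ccontr)
  assume "\<not> (card A < M \<or> card B < M)"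
  then obtain a b where "a \<in> A" "b \<in> B" "adj a b"
    using assms(1-3) unfolding dense_between_def by (meson not_less)
  then show False using assms(4) by blast
qed

lemma card_non_neighbours_less:
  assumes "dense_between adj M P Q" "A \<subseteq> P" "M \<le> card A"
  shows "card (Q - neighbours adj A) < M"
proof -
  have "\<forall>a\<in>A. \<forall>b\<in>Q - neighbours adj A. \<not> adj a b" unfolding neighbours_def by blast
  then show ?thesis
    using dense_between_no_edges[OF assms(1,2) Diff_subset[of Q "neighbours adj A"]] assms(3)
    by linarith
qed

lemma neighbours_subset: "bipartite adj P Q \<Longrightarrow> neighbours adj A \<subseteq> P \<union> Q"
  unfolding bipartite_def neighbours_def by blast

lemma neighbours_mono: "A \<subseteq> B \<Longrightarrow> neighbours adj A \<subseteq> neighbours adj B"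
  unfolding neighbours_def by blast

lemma neighbours_Un: "neighbours adj (A \<union> B) = neighbours adj A \<union> neighbours adj B"
  unfolding neighbours_def by blast

lemma le_card_Diff: "finite X \<Longrightarrow> card X + a \<le> card P \<Longrightarrow> a \<le> card (P - X)"
  using diff_card_le_card_Diff[of X P] by linarith

lemma card_bipartite_split:
  assumes "bipartite adj P Q" "finite X" "X \<subseteq> P \<union> Q"
  shows "card X = card (X \<inter> P) + card (X \<inter> Q)"
proof -
  have "X = (X \<inter> P) \<union> (X \<inter> Q)" "(X \<inter> P) \<inter> (X \<inter> Q) = {}"
    using assms unfolding bipartite_def by blast+
  then show ?thesis using assms(2) by (metis card_Un_disjoint finite_Int)
qed

lemma card_neighbours_large:
  assumes bg: "bipartite adj P Q" and fP: "finite P" and fQ: "finite Q"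
    and dn: "dense_between adj M P Q" and NP: "N \<le> card P" and NQ: "N \<le> card Q"
    and X: "X \<subseteq> P \<union> Q" and MX: "2 * M \<le> card X"
  shows "N < card (neighbours adj X) + M"
proof -
  have fN: "finite (neighbours adj X)"
    using neighbours_subset[OF bg] fP fQ finite_subset by blast
  have one_side: "N < card (neighbours adj X) + M"
    if "dense_between adj M P' Q'" "Y \<subseteq> P'" "M \<le> card Y" "Y \<subseteq> X" "finite Q'" "N \<le> card Q'"
    for P' Q' Y
  proof -
    have "Q' \<subseteq> (Q' - neighbours adj Y) \<union> neighbours adj X"
      using neighbours_mono[OF \<open>Y \<subseteq> X\<close>] by blast
    then have "card Q' \<le> card ((Q' - neighbours adj Y) \<union> neighbours adj X)"
      by (rule card_mono[rotated]) (use fN that(5) in auto)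
    also have "\<dots> \<le> card (Q' - neighbours adj Y) + card (neighbours adj X)"
      by (rule card_Un_le)
    finally have "card Q' \<le> card (Q' - neighbours adj Y) + card (neighbours adj X)" .
    then show ?thesis using card_non_neighbours_less[OF that(1-3)] that(6) by linarith
  qed
  have "card X = card (X \<inter> P) + card (X \<inter> Q)"
    using card_bipartite_split[OF bg _ X] X fP fQ finite_subset by blast
  then have "M \<le> card (X \<inter> P) \<or> M \<le> card (X \<inter> Q)" using MX by linarith
  then show ?thesis
    using one_side[OF dn _ _ _ fQ NQ, of "X \<inter> P"]
      one_side[OF dense_between_swap[OF bg dn] _ _ _ fP NP, of "X \<inter> Q"] by blast
qed

lemma path_alternates:
  assumes "bipartite adj P Q" "successively adj xs" "xs \<noteq> []" "hd xs \<in> P" "i < length xs"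
  shows "xs ! i \<in> (if even i then P else Q)"
  using assms(5)
proof (induction i)
  case 0
  then show ?case using assms(3,4) by (simp add: hd_conv_nth)
next
  case (Suc i)
  then have "adj (xs ! i) (xs ! Suc i)" using successively_nth[OF assms(2)] by blast
  moreover have "xs ! i \<in> (if even i then P else Q)" using Suc by simp
  ultimately show ?case using assms(1) unfolding bipartite_def by (fastforce simp: disjoint_iff)
qed

section \<open>Expansion outside a small set\<close>

definition expands :: "('v \<Rightarrow> 'v \<Rightarrow> bool) \<Rightarrow> nat \<Rightarrow> 'v set \<Rightarrow> 'v set \<Rightarrow> bool" where
  "expands adj M V R \<longleftrightarrow> (\<forall>S. S \<subseteq> V - R \<longrightarrow> S \<noteq> {} \<longrightarrow> card S \<le> M \<longrightarrow>
      8 * card S \<le> card (neighbours adj S - R))"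

lemma small_boundary_Un:
  assumes bg: "bipartite adj P Q" and fP: "finite P" and fQ: "finite Q"
    and dn: "dense_between adj M P Q" and NP: "N \<le> card P" and NQ: "N \<le> card Q"
    and NM: "28 * M \<le> N"
    and R: "R \<subseteq> P \<union> Q" "card R < 2 * M" "card (neighbours adj R - R) \<le> 8 * card R"
    and S: "S \<subseteq> P \<union> Q - R" "card S \<le> M" "card (neighbours adj S - R) < 8 * card S"
  shows "card (R \<union> S) < 2 * M \<and> card (neighbours adj (R \<union> S) - (R \<union> S)) \<le> 8 * card (R \<union> S)"
proof -
  have fV: "finite (P \<union> Q)" using fP fQ by blast
  then have fR: "finite R" and fS: "finite S" using R(1) S(1) finite_subset by blast+
  have cRS: "card (R \<union> S) = card R + card S"
    by (rule card_Un_disjoint) (use fR fS S(1) in auto)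
  have fN: "finite (neighbours adj R)" "finite (neighbours adj S)"
    using neighbours_subset[OF bg] fV finite_subset by blast+
  have "neighbours adj (R \<union> S) - (R \<union> S) \<subseteq> (neighbours adj R - R) \<union> (neighbours adj S - R)"
    unfolding neighbours_Un by blast
  then have "card (neighbours adj (R \<union> S) - (R \<union> S))
      \<le> card ((neighbours adj R - R) \<union> (neighbours adj S - R))"
    by (rule card_mono[rotated]) (use fN in auto)
  also have "\<dots> \<le> card (neighbours adj R - R) + card (neighbours adj S - R)"
    by (rule card_Un_le)
  finally have "card (neighbours adj (R \<union> S) - (R \<union> S))
      \<le> card (neighbours adj R - R) + card (neighbours adj S - R)" .
  then have boundary: "card (neighbours adj (R \<union> S) - (R \<union> S)) < 8 * card (R \<union> S)"
    using R(3) S(3) cRS by linarith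
  have "card (R \<union> S) < 2 * M"
  proof (rule ccontr)
    assume "\<not> card (R \<union> S) < 2 * M"
    then have "N < card (neighbours adj (R \<union> S)) + M"
      using card_neighbours_large[OF bg fP fQ dn NP NQ, of "R \<union> S"] R(1) S(1) by fastforce
    moreover have "card (neighbours adj (R \<union> S)) - card (R \<union> S)
        \<le> card (neighbours adj (R \<union> S) - (R \<union> S))"
      by (rule diff_card_le_card_Diff) (use fR fS in auto)
    ultimately show False using boundary cRS R(2) S(2) NM by linarith
  qed
  then show ?thesis using boundary by simp
qed

text \<open>R is a maximal set of fewer than 2M vertices with at most 8|R| neighbours outside R. A
  small set violating expansion could be added to it: by density a set of 2M vertices has more
  than N - M neighbours, so the union stays below 2M vertices.\<close>
lemma expanding_outside_small_set:
  assumes bg: "bipartite adj P Q" and fP: "finite P" and fQ: "finite Q"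
    and dn: "dense_between adj M P Q" and NP: "N \<le> card P" and NQ: "N \<le> card Q"
    and NM: "28 * M \<le> N" and M1: "1 \<le> M"
  obtains R where "R \<subseteq> P \<union> Q" "card R < 2 * M" "expands adj M (P \<union> Q) R"
proof -
  define good where
    "good R \<longleftrightarrow> R \<subseteq> P \<union> Q \<and> card R < 2 * M \<and> card (neighbours adj R - R) \<le> 8 * card R"
    for R
  have "good {}" unfolding good_def neighbours_def using M1 by auto
  then obtain R where R: "good R" and R_max: "\<And>R'. good R' \<Longrightarrow> card R' \<le> card R"
    using ex_has_greatest_nat[of good "{}" card "2 * M"] unfolding good_def by blast
  have "expands adj M (P \<union> Q) R"
    unfolding expands_def
  proof (intro allI impI)
    fix S assume S: "S \<subseteq> P \<union> Q - R" "S \<noteq> {}" "card S \<le> M"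
    show "8 * card S \<le> card (neighbours adj S - R)"
    proof (rule ccontr)
      assume "\<not> 8 * card S \<le> card (neighbours adj S - R)"
      then have "good (R \<union> S)"
        using small_boundary_Un[OF bg fP fQ dn NP NQ NM, of R S] R S(1,3)
        unfolding good_def by auto
      then have "card (R \<union> S) \<le> card R" by (rule R_max)
      moreover have "finite R" "finite S"
        using R S(1) fP fQ finite_subset unfolding good_def by blast+
      then have "card (R \<union> S) = card R + card S" "card S > 0"
        using S(1,2) by (blast intro: card_Un_disjoint, simp add: card_gt_0_iff)
      ultimately show False by linarith
    qed
  qed
  then show thesis using that R unfolding good_def by blast
qed

section \<open>Two disjoint trees\<close>

definition tree_leaves :: "('v \<Rightarrow> 'v \<Rightarrow> bool) \<Rightarrow> 'v \<Rightarrow> nat \<Rightarrow> 'v set \<Rightarrow> 'v set \<Rightarrow> bool" where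
  "tree_leaves adj a j A F \<longleftrightarrow> a \<in> F \<and> A \<subseteq> F \<and> (\<forall>u\<in>A. \<exists>xs. length xs = Suc j \<and> hd xs = a \<and>
      last xs = u \<and> distinct xs \<and> set xs \<subseteq> F \<and> successively adj xs)"

lemma tree_leaves_root: "tree_leaves adj a 0 {a} {a}"
  unfolding tree_leaves_def by (intro conjI ballI exI[of _ "[a]"]) auto

lemma tree_leaves_extend:
  assumes "tree_leaves adj a j A F" "A' \<subseteq> neighbours adj A - G" "F \<subseteq> G"
  shows "tree_leaves adj a (Suc j) A' (F \<union> A')"
  unfolding tree_leaves_def
proof (intro conjI ballI)
  show "a \<in> F \<union> A'" using assms(1) unfolding tree_leaves_def by blast
  show "A' \<subseteq> F \<union> A'" by blast
  fix u' assume u': "u' \<in> A'"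
  then obtain u where u: "u \<in> A" "adj u u'" using assms(2) unfolding neighbours_def by blast
  then obtain xs where xs: "length xs = Suc j" "hd xs = a" "last xs = u" "distinct xs"
    "set xs \<subseteq> F" "successively adj xs" using assms(1) unfolding tree_leaves_def by blast
  have "xs \<noteq> []" using xs(1) by auto
  moreover have "u' \<notin> set xs" using xs(5) assms(2,3) u' by blast
  ultimately show "\<exists>xs. length xs = Suc (Suc j) \<and> hd xs = a \<and> last xs = u' \<and> distinct xs \<and>
      set xs \<subseteq> F \<union> A' \<and> successively adj xs"
    using xs u u' by (intro exI[of _ "xs @ [u']"]) (auto simp: successively_append_iff)
qed

lemma tree_leaves_side:
  assumes "bipartite adj P Q" "tree_leaves adj a j A F" "a \<in> P"
  shows "A \<subseteq> (if even j then P else Q)"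
proof
  fix u assume "u \<in> A"
  then obtain xs where xs: "length xs = Suc j" "hd xs = a" "last xs = u" "successively adj xs"
    using assms(2) unfolding tree_leaves_def by blast
  have ne: "xs \<noteq> []" using xs(1) by auto
  then have "last xs = xs ! j" using xs(1) by (simp add: last_conv_nth)
  then show "u \<in> (if even j then P else Q)"
    using path_alternates[OF assms(1) xs(4) ne] xs assms(3) by simp
qed

lemma tree_leaves_grow:
  assumes bg: "bipartite adj P Q" and ex: "expands adj M (P \<union> Q) R"
    and tree: "tree_leaves adj a j A F" and FV: "F \<subseteq> P \<union> Q - R"
    and cA: "card A = s" "1 \<le> s" "s \<le> M"
    and G: "F \<subseteq> G" "finite G" "card G + x \<le> 8 * s"
  obtains A' where "tree_leaves adj a (Suc j) A' (F \<union> A')" "card A' = x" "A' \<inter> G = {}"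
    "A' \<subseteq> P \<union> Q - R"
proof -
  have "A \<subseteq> P \<union> Q - R" "A \<noteq> {}" "card A \<le> M"
    using tree FV cA unfolding tree_leaves_def by auto
  then have "8 * s \<le> card (neighbours adj A - R)"
    using ex cA(1) unfolding expands_def by blast
  moreover have "card (neighbours adj A - R) - card G \<le> card (neighbours adj A - R - G)"
    by (rule diff_card_le_card_Diff[OF G(2)])
  ultimately have "x \<le> card (neighbours adj A - R - G)" using G(3) by linarith
  then obtain A' where A': "A' \<subseteq> neighbours adj A - R - G" "card A' = x"
    by (meson obtain_subset_with_card_n)
  have "tree_leaves adj a (Suc j) A' (F \<union> A')"
    by (rule tree_leaves_extend[OF tree _ G(1)]) (use A' in blast)
  moreover have "A' \<subseteq> P \<union> Q - R" using A'(1) neighbours_subset[OF bg] by blast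
  ultimately show thesis using that A' by blast
qed

definition twin_trees ::
    "('v \<Rightarrow> 'v \<Rightarrow> bool) \<Rightarrow> 'v set \<Rightarrow> 'v \<Rightarrow> 'v \<Rightarrow> nat \<Rightarrow> 'v set \<Rightarrow> 'v set \<Rightarrow> 'v set \<Rightarrow> 'v set \<Rightarrow> bool"
  where "twin_trees adj V a b j A B Fa Fb \<longleftrightarrow> tree_leaves adj a j A Fa \<and> tree_leaves adj b j B Fb \<and>
      Fa \<inter> Fb = {} \<and> Fa \<subseteq> V \<and> Fb \<subseteq> V"

text \<open>Each tree may grow to at most twice its number of leaves: with 8-fold expansion the
  neighbourhood of s leaves still has room once both trees (at most 4s vertices) and the new
  leaves of the other tree are avoided.\<close>
lemma twin_trees_grow:
  assumes bg: "bipartite adj P Q" and fin: "finite (P \<union> Q)" and ex: "expands adj M (P \<union> Q) R"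
    and tw: "twin_trees adj (P \<union> Q - R) a b j A B Fa Fb"
    and cAB: "card A = s" "card B = s" and cF: "card Fa \<le> 2 * s" "card Fb \<le> 2 * s"
    and s: "1 \<le> s" "s \<le> M" and x: "x \<le> 2 * s"
  obtains A' B' Fa' Fb' where "twin_trees adj (P \<union> Q - R) a b (Suc j) A' B' Fa' Fb'"
    "card A' = x" "card B' = x" "card Fa' \<le> 2 * s + x" "card Fb' \<le> 2 * s + x"
proof -
  have ta: "tree_leaves adj a j A Fa" and tb: "tree_leaves adj b j B Fb"
    and dj: "Fa \<inter> Fb = {}" and FV: "Fa \<subseteq> P \<union> Q - R" "Fb \<subseteq> P \<union> Q - R"
    using tw unfolding twin_trees_def by auto
  have fF: "finite Fa" "finite Fb" using FV fin finite_subset by blast+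
  have fG: "finite (Fa \<union> Fb)" using fF by blast
  have "card (Fa \<union> Fb) + x \<le> 8 * s" using card_Un_le[of Fa Fb] cF x by linarith
  then obtain A' where A': "tree_leaves adj a (Suc j) A' (Fa \<union> A')" "card A' = x"
      "A' \<inter> (Fa \<union> Fb) = {}" "A' \<subseteq> P \<union> Q - R"
    using tree_leaves_grow[OF bg ex ta FV(1) cAB(1) s _ fG] by blast
  have cFa': "card (Fa \<union> A') \<le> 2 * s + x" using card_Un_le[of Fa A'] cF A'(2) by linarith
  have fG': "finite (Fa \<union> A' \<union> Fb)" using fF A'(4) fin finite_subset by blast
  have "card (Fa \<union> A' \<union> Fb) + x \<le> 8 * s" using card_Un_le[of "Fa \<union> A'" Fb] cFa' cF x by linarith
  then obtain B' where B': "tree_leaves adj b (Suc j) B' (Fb \<union> B')" "card B' = x"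
      "B' \<inter> (Fa \<union> A' \<union> Fb) = {}" "B' \<subseteq> P \<union> Q - R"
    using tree_leaves_grow[OF bg ex tb FV(2) cAB(2) s _ fG'] by blast
  have cFb': "card (Fb \<union> B') \<le> 2 * s + x" using card_Un_le[of Fb B'] cF B'(2) by linarith
  have "twin_trees adj (P \<union> Q - R) a b (Suc j) A' B' (Fa \<union> A') (Fb \<union> B')"
    unfolding twin_trees_def using A' B' dj FV by blast
  then show thesis using that A'(2) B'(2) cFa' cFb' by blast
qed

lemma twin_trees_double:
  assumes bg: "bipartite adj P Q" and fin: "finite (P \<union> Q)" and ex: "expands adj M (P \<union> Q) R"
    and ab: "a \<in> P - R" "b \<in> Q - R" and jM: "2 ^ j \<le> M"
  shows "\<exists>A B Fa Fb. twin_trees adj (P \<union> Q - R) a b j A B Fa Fb \<and>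
      card A = 2 ^ j \<and> card B = 2 ^ j \<and> card Fa \<le> 2 * 2 ^ j \<and> card Fb \<le> 2 * 2 ^ j"
  using jM
proof (induction j)
  case 0
  have "a \<noteq> b" using ab bg unfolding bipartite_def by blast
  then have "twin_trees adj (P \<union> Q - R) a b 0 {a} {b} {a} {b}"
    using ab tree_leaves_root unfolding twin_trees_def by auto
  then show ?case by (intro exI[of _ "{a}"] exI[of _ "{b}"] exI[of _ "{a}"] exI[of _ "{b}"]) simp
next
  case (Suc j)
  then obtain A B Fa Fb where tw: "twin_trees adj (P \<union> Q - R) a b j A B Fa Fb"
      "card A = 2 ^ j" "card B = 2 ^ j" "card Fa \<le> 2 * 2 ^ j" "card Fb \<le> 2 * 2 ^ j"
    by auto
  have "1 \<le> (2::nat) ^ j" "2 ^ j \<le> M" "2 * 2 ^ j \<le> 2 * (2::nat) ^ j" using Suc.prems by auto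
  then obtain A' B' Fa' Fb' where "twin_trees adj (P \<union> Q - R) a b (Suc j) A' B' Fa' Fb'"
      "card A' = 2 * 2 ^ j" "card B' = 2 * 2 ^ j"
      "card Fa' \<le> 2 * 2 ^ j + 2 * 2 ^ j" "card Fb' \<le> 2 * 2 ^ j + 2 * 2 ^ j"
    using twin_trees_grow[OF bg fin ex tw] by blast
  then show ?case by (intro exI[of _ A'] exI[of _ B'] exI[of _ Fa'] exI[of _ Fb']) simp
qed

lemma twin_trees_exist:
  assumes bg: "bipartite adj P Q" and fin: "finite (P \<union> Q)" and ex: "expands adj M (P \<union> Q) R"
    and ab: "a \<in> P - R" "b \<in> Q - R" and x: "1 \<le> x" "x \<le> M" "x \<le> 2 ^ j"
  shows "\<exists>i A B Fa Fb. i \<le> j \<and> twin_trees adj (P \<union> Q - R) a b i A B Fa Fb \<and>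
      card A = x \<and> card B = x \<and> card Fa \<le> 3 * x \<and> card Fb \<le> 3 * x"
  using x(3)
proof (induction j)
  case 0
  then have "x = 1" using x(1) by simp
  then obtain A B Fa Fb where "twin_trees adj (P \<union> Q - R) a b 0 A B Fa Fb"
      "card A = x" "card B = x" "card Fa \<le> 2 * x" "card Fb \<le> 2 * x"
    using twin_trees_double[OF bg fin ex ab, of 0] x(2) by auto
  then show ?case by (intro exI[of _ 0] exI[of _ A] exI[of _ B] exI[of _ Fa] exI[of _ Fb]) simp
next
  case (Suc j)
  show ?case
  proof (cases "x \<le> 2 ^ j")
    case True
    then show ?thesis using Suc.IH le_SucI by blast
  next
    case False
    then obtain A B Fa Fb where tw: "twin_trees adj (P \<union> Q - R) a b j A B Fa Fb"
        "card A = 2 ^ j" "card B = 2 ^ j" "card Fa \<le> 2 * 2 ^ j" "card Fb \<le> 2 * 2 ^ j"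
      using twin_trees_double[OF bg fin ex ab, of j] x(2) by auto
    have s: "1 \<le> (2::nat) ^ j" "2 ^ j \<le> M" "x \<le> 2 * 2 ^ j"
      using False x(2) Suc.prems by auto
    obtain A' B' Fa' Fb' where "twin_trees adj (P \<union> Q - R) a b (Suc j) A' B' Fa' Fb'"
        "card A' = x" "card B' = x" "card Fa' \<le> 2 * 2 ^ j + x" "card Fb' \<le> 2 * 2 ^ j + x"
      using twin_trees_grow[OF bg fin ex tw s] by blast
    moreover have "2 * 2 ^ j + x \<le> 3 * x" using False by simp
    ultimately show ?thesis
      by (intro exI[of _ "Suc j"] exI[of _ A'] exI[of _ B'] exI[of _ Fa'] exI[of _ Fb']) auto
  qed
qed

section \<open>Long paths by depth-first search\<close>

text \<open>A stage of depth-first search in W: the finished vertices S have no neighbours among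
  the unvisited ones, and the stack T is a path. At most 2M vertices are ever finished.\<close>
definition dfs_state :: "('v \<Rightarrow> 'v \<Rightarrow> bool) \<Rightarrow> nat \<Rightarrow> 'v set \<Rightarrow> 'v set \<Rightarrow> 'v list \<Rightarrow> bool" where
  "dfs_state adj M W S T \<longleftrightarrow> S \<subseteq> W \<and> set T \<subseteq> W \<and> distinct T \<and> S \<inter> set T = {} \<and>
     successively adj T \<and> card S \<le> 2 * M \<and> (\<forall>s\<in>S. \<forall>u\<in>W - S - set T. \<not> adj s u)"

lemma dfs_state_push:
  assumes "dfs_state adj M W S T" "u \<in> W - S - set T" "T = [] \<or> adj (last T) u"
  shows "dfs_state adj M W S (T @ [u])"
  using assms unfolding dfs_state_def by (auto simp: successively_append_iff)

lemma dfs_state_pop: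
  assumes st: "dfs_state adj M W S T" and "T \<noteq> []"
    and stuck: "\<forall>u\<in>W - S - set T. \<not> adj (last T) u" and cS: "card S < 2 * M"
  shows "dfs_state adj M W (insert (last T) S) (butlast T)"
proof -
  define v where "v = last T"
  have T: "T = butlast T @ [v]" using \<open>T \<noteq> []\<close> unfolding v_def by simp
  then have "distinct (butlast T @ [v])" using st unfolding dfs_state_def by metis
  then have set_butlast: "set (butlast T) = set T - {v}" by (subst (2) T) auto
  have "successively adj (butlast T)" using st T unfolding dfs_state_def
    by (metis successively_append_iff)
  moreover have "card (insert v S) \<le> 2 * M" using cS by (intro card_insert_le_m1) auto
  moreover have "v \<in> set T" using \<open>T \<noteq> []\<close> unfolding v_def by simp
  ultimately show ?thesis using st stuck set_butlast unfolding dfs_state_def v_def[symmetric]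
    by (auto simp: distinct_butlast)
qed

lemma dfs_state_full:
  assumes bg: "bipartite adj P Q" and dn: "dense_between adj M P Q" and fW: "finite W"
    and WV: "W \<subseteq> P \<union> Q" and st: "dfs_state adj M W S T" and cS: "card S = 2 * M"
    and KP: "K \<le> card (W \<inter> P)" and KQ: "K \<le> card (W \<inter> Q)"
  shows "K \<le> length T + 3 * M"
proof -
  define U where "U = W - S - set T"
  have SW: "S \<subseteq> W" and no_edge: "\<forall>s\<in>S. \<forall>u\<in>U. \<not> adj s u" and dT: "distinct T"
    using st unfolding dfs_state_def U_def by auto
  have fS: "finite S" using SW fW finite_subset by blast
  have bound: "K \<le> length T + 3 * M"
    if dn': "dense_between adj M P' Q'" and MS: "M \<le> card (S \<inter> P')" and KQ': "K \<le> card (W \<inter> Q')"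
    for P' Q'
  proof -
    have "card (U \<inter> Q') < M"
      using dense_between_no_edges[OF dn' Int_lower2 Int_lower2, of S "U"] MS no_edge by auto
    have "W \<inter> Q' \<subseteq> S \<union> (U \<inter> Q') \<union> set T" unfolding U_def by blast
    then have "card (W \<inter> Q') \<le> card (S \<union> (U \<inter> Q') \<union> set T)"
      by (rule card_mono[rotated]) (use fS fW in \<open>auto simp: U_def\<close>)
    also have "\<dots> \<le> card S + card (U \<inter> Q') + card (set T)"
      by (meson add_le_mono1 card_Un_le le_trans)
    finally show ?thesis using \<open>card (U \<inter> Q') < M\<close> cS KQ' distinct_card[OF dT] by linarith
  qed
  have "card S = card (S \<inter> P) + card (S \<inter> Q)"
    using card_bipartite_split[OF bg fS] SW WV by blast
  then have "M \<le> card (S \<inter> P) \<or> M \<le> card (S \<inter> Q)" using cS by linarith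
  then show ?thesis using bound[OF dn _ KQ] bound[OF dense_between_swap[OF bg dn] _ KP] by blast
qed

lemma dfs_state_maximal:
  fixes adj :: "'v \<Rightarrow> 'v \<Rightarrow> bool"
  assumes fW: "finite W"
  obtains S T where "dfs_state adj M W S T"
    "\<And>S' T'. dfs_state adj M W S' T' \<Longrightarrow> 2 * card S' + length T' \<le> 2 * card S + length T"
proof -
  define weight where "weight x = 2 * card (fst x) + length (snd x)" for x :: "'v set \<times> 'v list"
  have "weight x < 3 * card W + 1" if "dfs_state adj M W (fst x) (snd x)" for x
  proof -
    have "card (fst x) \<le> card W" "card (set (snd x)) \<le> card W"
      using that fW card_mono unfolding dfs_state_def by blast+
    moreover have "length (snd x) = card (set (snd x))"
      using that unfolding dfs_state_def by (simp add: distinct_card)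
    ultimately show ?thesis unfolding weight_def by linarith
  qed
  moreover have "dfs_state adj M W (fst ({}, [])) (snd ({}, []))" unfolding dfs_state_def by simp
  ultimately obtain x where "dfs_state adj M W (fst x) (snd x)"
      "\<forall>y. dfs_state adj M W (fst y) (snd y) \<longrightarrow> weight y \<le> weight x"
    using ex_has_greatest_nat[of "\<lambda>x. dfs_state adj M W (fst x) (snd x)" "({}, [])" weight]
    by blast
  then show thesis using that[of "fst x" "snd x"] unfolding weight_def by force
qed

lemma dfs_state_terminal:
  fixes adj :: "'v \<Rightarrow> 'v \<Rightarrow> bool"
  assumes fW: "finite W"
  obtains S T where "dfs_state adj M W S T" "\<forall>u\<in>W - S - set T. T \<noteq> [] \<and> \<not> adj (last T) u"
    "T \<noteq> [] \<Longrightarrow> card S = 2 * M"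
proof -
  obtain S T where st: "dfs_state adj M W S T"
    and max: "\<And>S' T'. dfs_state adj M W S' T' \<Longrightarrow> 2 * card S' + length T' \<le> 2 * card S + length T"
    using dfs_state_maximal[OF fW] by blast
  have no_push: "\<forall>u\<in>W - S - set T. T \<noteq> [] \<and> \<not> adj (last T) u"
  proof (intro ballI)
    fix u assume u: "u \<in> W - S - set T"
    show "T \<noteq> [] \<and> \<not> adj (last T) u"
    proof (rule ccontr)
      assume "\<not> (T \<noteq> [] \<and> \<not> adj (last T) u)"
      then have "dfs_state adj M W S (T @ [u])" using dfs_state_push[OF st u] by blast
      from max[OF this] show False by simp
    qed
  qed
  moreover have "card S = 2 * M" if "T \<noteq> []"
  proof (rule ccontr)
    assume "card S \<noteq> 2 * M"
    then have "card S < 2 * M" using st unfolding dfs_state_def by simp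
    have "last T \<notin> S" using st that unfolding dfs_state_def by auto
    moreover have "finite S" using st fW finite_subset unfolding dfs_state_def by blast
    ultimately have "2 * card (insert (last T) S) + length (butlast T) = 2 * card S + length T + 1"
      using that by (cases T rule: rev_cases) (auto simp: card_insert_disjoint)
    then show False
      using max[OF dfs_state_pop[OF st that _ \<open>card S < 2 * M\<close>]] no_push that by simp
  qed
  ultimately show thesis using that st by blast
qed

lemma long_path_exists:
  assumes bg: "bipartite adj P Q" and dn: "dense_between adj M P Q" and fW: "finite W"
    and WV: "W \<subseteq> P \<union> Q" and KP: "K \<le> card (W \<inter> P)" and KQ: "K \<le> card (W \<inter> Q)"
    and K: "2 * M < K"
  obtains T where "set T \<subseteq> W" "distinct T" "successively adj T" "K \<le> length T + 3 * M"
proof -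
  obtain S T where st: "dfs_state adj M W S T"
      and no_push: "\<forall>u\<in>W - S - set T. T \<noteq> [] \<and> \<not> adj (last T) u"
      and full: "T \<noteq> [] \<Longrightarrow> card S = 2 * M"
    using dfs_state_terminal[OF fW] by blast
  have "T \<noteq> []"
  proof
    assume "T = []"
    then have "W \<inter> P \<subseteq> S" using no_push by auto
    moreover have "finite S" "card S \<le> 2 * M"
      using st fW finite_subset unfolding dfs_state_def by blast+
    ultimately have "card (W \<inter> P) \<le> 2 * M" using card_mono order_trans by blast
    then show False using KP K by linarith
  qed
  then have "K \<le> length T + 3 * M" using dfs_state_full[OF bg dn fW WV st full KP KQ] by blast
  then show thesis using that st unfolding dfs_state_def by blast
qed

section \<open>Closing an even cycle\<close>

lemma path_alternates_offset:
  assumes "bipartite adj P Q" "successively adj p" "2 \<le> length p"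
  obtains e :: nat where "e \<le> 1" "\<forall>i<length p. p ! i \<in> (if even (i + e) then P else Q)"
proof -
  have "p \<noteq> []" using assms(3) by auto
  have "adj (p ! 0) (p ! 1)" using successively_nth[OF assms(2), of 0] assms(3) by simp
  then have "hd p \<in> P \<or> hd p \<in> Q"
    using assms(1) \<open>p \<noteq> []\<close> unfolding bipartite_def by (auto simp: hd_conv_nth)
  then show thesis
  proof
    assume "hd p \<in> P"
    then show thesis using that[of 0] path_alternates[OF assms(1,2) \<open>p \<noteq> []\<close>] by simp
  next
    assume "hd p \<in> Q"
    then have "p ! i \<in> (if even (i + 1) then P else Q)" if "i < length p" for i
      using path_alternates[OF bipartite_swap[OF assms(1)] assms(2) \<open>p \<noteq> []\<close> _ that] by auto
    then show thesis by (intro that[of 1]) auto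
  qed
qed

lemma successively_take_drop: "successively R p \<Longrightarrow> successively R (take n (drop m p))"
  by (metis append_take_drop_id successively_append_iff)

lemma path_segment_between:
  assumes sp: "successively adj p" and dp: "distinct p" and k: "k + (r - 2) < length p"
    and r: "2 \<le> r" and ab: "adj a (p ! k)" "adj (p ! (k + (r - 2))) b"
  obtains seg where "length seg = r - 1" "set seg \<subseteq> set p" "distinct seg"
    "successively adj (a # seg @ [b])"
proof -
  define seg where "seg = take (r - 1) (drop k p)"
  have len_seg: "length seg = r - 1" unfolding seg_def using k r by auto
  then have "seg \<noteq> []" using r by auto
  moreover have "hd seg = p ! k" unfolding seg_def using k r
    by (simp add: hd_conv_nth nth_take nth_drop)
  moreover have "last seg = p ! (k + (r - 2))" unfolding seg_def using k r
    by (simp add: last_conv_nth nth_take nth_drop numeral_2_eq_2)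
  moreover have "successively adj seg" unfolding seg_def using sp by (rule successively_take_drop)
  ultimately have "successively adj (a # seg @ [b])"
    using ab by (auto simp: successively_Cons successively_append_iff)
  moreover have "set seg \<subseteq> set p"
    unfolding seg_def by (meson order.trans set_drop_subset set_take_subset)
  moreover have "distinct seg" unfolding seg_def using dp by simp
  ultimately show thesis using that len_seg by blast
qed

lemma card_not_adjacent_less:
  assumes dn: "dense_between adj M P Q" and AP: "A \<subseteq> P" and cA: "M \<le> card A"
    and f: "inj_on f I" "f ` I \<subseteq> Q"
  shows "card {i \<in> I. \<forall>a\<in>A. \<not> adj a (f i)} < M"
proof -
  let ?J = "{i \<in> I. \<forall>a\<in>A. \<not> adj a (f i)}"
  have "f ` ?J \<subseteq> Q" "\<forall>a\<in>A. \<forall>x\<in>f ` ?J. \<not> adj a x" using f(2) by blast+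
  then have "card (f ` ?J) < M" using dense_between_no_edges[OF dn AP] cA by (meson leD)
  moreover have "inj_on f ?J" using f(1) by (rule inj_on_subset) blast
  ultimately show ?thesis by (simp add: card_image)
qed

lemma path_odd_segments:
  assumes bg: "bipartite adj P Q" and sp: "successively adj p" and dp: "distinct p"
    and r: "odd r" "3 \<le> r" and len: "4 * M + r \<le> length p"
  obtains g where "\<And>i. i < 2 * M \<Longrightarrow> g i + (r - 2) < length p"
    "\<And>i. i < 2 * M \<Longrightarrow> p ! g i \<in> Q" "\<And>i. i < 2 * M \<Longrightarrow> p ! (g i + (r - 2)) \<in> P"
    "\<And>d. d \<le> r - 2 \<Longrightarrow> inj_on (\<lambda>i. p ! (g i + d)) {..<2 * M}"
proof -
  have "2 \<le> length p" using len r by linarith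
  then obtain e where e: "e \<le> 1" and side: "\<forall>i<length p. p ! i \<in> (if even (i + e) then P else Q)"
    using path_alternates_offset[OF bg sp] by blast
  define g where "g i = 2 * i + (1 - e)" for i
  have g_len: "g i + (r - 2) < length p" if "i < 2 * M" for i
    using that len e r(2) unfolding g_def by linarith
  have start_Q: "p ! g i \<in> Q" if "i < 2 * M" for i
  proof -
    have "g i < length p" using g_len[OF that] by linarith
    then show ?thesis using side e unfolding g_def by (cases e) auto
  qed
  have end_P: "p ! (g i + (r - 2)) \<in> P" if "i < 2 * M" for i
  proof -
    have "even (g i + (r - 2) + e)" using e r unfolding g_def by (cases e) auto
    moreover have "p ! (g i + (r - 2)) \<in> (if even (g i + (r - 2) + e) then P else Q)"
      using side g_len[OF that] by blast
    ultimately show ?thesis by simp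
  qed
  have inj: "inj_on (\<lambda>i. p ! (g i + d)) {..<2 * M}" if "d \<le> r - 2" for d
  proof (rule inj_onI)
    fix i j assume ij: "i \<in> {..<2 * M}" "j \<in> {..<2 * M}" "p ! (g i + d) = p ! (g j + d)"
    have "g i + d < length p" "g j + d < length p" using g_len ij(1,2) that by fastforce+
    then have "g i + d = g j + d" using ij(3) dp nth_eq_iff_index_eq by blast
    then show "i = j" unfolding g_def by simp
  qed
  show thesis by (rule that[OF g_len start_Q end_P inj])
qed

text \<open>Of the 2M segments of r - 1 vertices starting at Q-vertices, fewer than M start outside
  the neighbourhood of A and fewer than M end outside the neighbourhood of B.\<close>
lemma path_segment_joining:
  assumes bg: "bipartite adj P Q" and dn: "dense_between adj M P Q"
    and AP: "A \<subseteq> P" and BQ: "B \<subseteq> Q" and cA: "M \<le> card A" and cB: "M \<le> card B"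
    and sp: "successively adj p" and dp: "distinct p"
    and r: "odd r" "3 \<le> r" and len: "4 * M + r \<le> length p"
  obtains a b seg where "a \<in> A" "b \<in> B" "length seg = r - 1" "set seg \<subseteq> set p"
    "distinct seg" "successively adj (a # seg @ [b])"
proof -
  obtain g where g_len: "\<And>i. i < 2 * M \<Longrightarrow> g i + (r - 2) < length p"
      and start_Q: "\<And>i. i < 2 * M \<Longrightarrow> p ! g i \<in> Q"
      and end_P: "\<And>i. i < 2 * M \<Longrightarrow> p ! (g i + (r - 2)) \<in> P"
      and inj: "\<And>d. d \<le> r - 2 \<Longrightarrow> inj_on (\<lambda>i. p ! (g i + d)) {..<2 * M}"
    using path_odd_segments[OF bg sp dp r len] by blast
  define bad_start where "bad_start = {i \<in> {..<2 * M}. \<forall>a\<in>A. \<not> adj a (p ! g i)}"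
  define bad_end where "bad_end = {i \<in> {..<2 * M}. \<forall>b\<in>B. \<not> adj b (p ! (g i + (r - 2)))}"
  have "inj_on (\<lambda>i. p ! g i) {..<2 * M}" using inj[of 0] by simp
  moreover have "(\<lambda>i. p ! g i) ` {..<2 * M} \<subseteq> Q" using start_Q by auto
  ultimately have "card bad_start < M"
    unfolding bad_start_def by (rule card_not_adjacent_less[OF dn AP cA])
  moreover have "card bad_end < M"
    unfolding bad_end_def using inj[of "r - 2"] end_P
    by (intro card_not_adjacent_less[OF dense_between_swap[OF bg dn] BQ cB]) auto
  ultimately have "card (bad_start \<union> bad_end) < card {..<2 * M}"
    using card_Un_le[of bad_start bad_end] by simp
  moreover have "finite (bad_start \<union> bad_end)" unfolding bad_start_def bad_end_def by auto
  ultimately have "\<not> {..<2 * M} \<subseteq> bad_start \<union> bad_end"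
    using card_mono[of "bad_start \<union> bad_end" "{..<2 * M}"] by linarith
  then obtain i a b where i: "i < 2 * M" and ab: "a \<in> A" "adj a (p ! g i)" "b \<in> B"
      "adj b (p ! (g i + (r - 2)))"
    unfolding bad_start_def bad_end_def by blast
  have "adj (p ! (g i + (r - 2))) b" using ab(4) bg unfolding bipartite_def by blast
  moreover have "2 \<le> r" using r(2) by simp
  ultimately obtain seg where "length seg = r - 1" "set seg \<subseteq> set p" "distinct seg"
      "successively adj (a # seg @ [b])"
    using path_segment_between[OF sp dp g_len[OF i] _ ab(2)] by blast
  then show thesis using that ab(1,3) by blast
qed

definition is_cycle :: "('v \<Rightarrow> 'v \<Rightarrow> bool) \<Rightarrow> 'v list \<Rightarrow> bool" where
  "is_cycle adj cyc \<longleftrightarrow> distinct cyc \<and> successively adj cyc \<and> adj (last cyc) (hd cyc)"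

lemma is_cycle_join:
  assumes sym: "\<forall>u v. adj u v \<longrightarrow> adj v u"
    and xa: "xa \<noteq> []" "successively adj xa" and xb: "xb \<noteq> []" "successively adj xb"
    and seg: "successively adj (last xa # seg @ [last xb])"
    and d: "distinct (xa @ seg @ xb)" and ab: "adj (hd xa) (hd xb)"
  shows "is_cycle adj (xa @ seg @ rev xb)"
  unfolding is_cycle_def
proof (intro conjI)
  have rev_xb: "successively adj (rev xb)" "hd (rev xb) = last xb"
    using xb sym by (simp_all add: successively_mono[of adj xb] hd_rev)
  show "successively adj (xa @ seg @ rev xb)"
  proof (cases "seg = []")
    case True
    then show ?thesis using seg xa rev_xb xb by (auto simp: successively_append_iff)
  next
    case False
    then have "adj (last xa) (hd seg)" "successively adj seg" "adj (last seg) (last xb)"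
      using seg by (auto simp: successively_Cons successively_append_iff)
    then show ?thesis using False xa rev_xb xb by (auto simp: successively_append_iff)
  qed
  show "distinct (xa @ seg @ rev xb)" using d by auto
  show "adj (last (xa @ seg @ rev xb)) (hd (xa @ seg @ rev xb))"
    using xa xb ab sym by (simp add: last_rev)
qed

lemma path_joining:
  assumes bg: "bipartite adj P Q" and dn: "dense_between adj M P Q" and fW: "finite W"
    and AP: "A \<subseteq> P" and BQ: "B \<subseteq> Q" and cA: "M \<le> card A" and cB: "M \<le> card B"
    and WV: "W \<subseteq> P \<union> Q" and KP: "73 * M \<le> card (W \<inter> P)" and KQ: "73 * M \<le> card (W \<inter> Q)"
    and r: "odd r" "r \<le> M"
  obtains a b seg where "a \<in> A" "b \<in> B" "length seg = r - 1" "set seg \<subseteq> W" "distinct seg"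
    "successively adj (a # seg @ [b])"
proof (cases "r = 1")
  case True
  obtain a b where "a \<in> A" "b \<in> B" "adj a b"
    using dense_between_no_edges[OF dn AP BQ] cA cB leD by blast
  then show thesis using that[of a b "[]"] True by simp
next
  case False
  then have r3: "3 \<le> r" using r(1) by presburger
  obtain T where T: "set T \<subseteq> W" "distinct T" "successively adj T" "73 * M \<le> length T + 3 * M"
    using long_path_exists[OF bg dn fW WV KP KQ] r by auto
  have "4 * M + r \<le> length T" using T(4) r(2) by linarith
  then obtain a b seg where "a \<in> A" "b \<in> B" "length seg = r - 1" "set seg \<subseteq> set T"
      "distinct seg" "successively adj (a # seg @ [b])"
    using path_segment_joining[OF bg dn AP BQ cA cB T(3,2) r(1) r3] by blast
  then show thesis using that T(1) by blast
qed

lemma twin_trees_close_cycle: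
  assumes sym: "\<forall>u v. adj u v \<longrightarrow> adj v u" and tw: "twin_trees adj V a b j A B Fa Fb"
    and ab: "adj a b" and seg: "a' \<in> A" "b' \<in> B" "set seg \<inter> (Fa \<union> Fb) = {}" "distinct seg"
      "successively adj (a' # seg @ [b'])"
  obtains cyc where "length cyc = 2 * j + 2 + length seg" "is_cycle adj cyc"
proof -
  obtain xa where xa: "length xa = Suc j" "hd xa = a" "last xa = a'" "distinct xa" "set xa \<subseteq> Fa"
      "successively adj xa"
    using tw seg(1) unfolding twin_trees_def tree_leaves_def by blast
  obtain xb where xb: "length xb = Suc j" "hd xb = b" "last xb = b'" "distinct xb" "set xb \<subseteq> Fb"
      "successively adj xb"
    using tw seg(2) unfolding twin_trees_def tree_leaves_def by blast
  have "Fa \<inter> Fb = {}" using tw unfolding twin_trees_def by blast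
  then have "set xa \<inter> set seg = {}" "set xa \<inter> set xb = {}" "set seg \<inter> set xb = {}"
    using xa(5) xb(5) seg(3) by blast+
  then have "distinct (xa @ seg @ xb)" using xa(4) xb(4) seg(4) by auto
  moreover have "xa \<noteq> []" "xb \<noteq> []" using xa(1) xb(1) by auto
  ultimately have "is_cycle adj (xa @ seg @ rev xb)"
    using is_cycle_join[OF sym] xa xb seg(5) ab by simp
  moreover have "length (xa @ seg @ rev xb) = 2 * j + 2 + length seg" using xa(1) xb(1) by simp
  ultimately show thesis using that by blast
qed

lemma twin_trees_cycle:
  assumes bg: "bipartite adj P Q" and dn: "dense_between adj M P Q" and fW: "finite W"
    and tw: "twin_trees adj V a b j A B Fa Fb" and ab: "a \<in> P" "b \<in> Q" "adj a b"
    and cAB: "M \<le> card A" "M \<le> card B"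
    and W: "W \<subseteq> P \<union> Q" "W \<inter> (Fa \<union> Fb) = {}" "73 * M \<le> card (W \<inter> P)" "73 * M \<le> card (W \<inter> Q)"
    and r: "odd r" "r \<le> M"
  obtains cyc where "length cyc = 2 * j + 1 + r" "is_cycle adj cyc"
proof -
  have "tree_leaves adj a j A Fa" "tree_leaves adj b j B Fb"
    using tw unfolding twin_trees_def by auto
  then have leaves: "A \<subseteq> (if even j then P else Q)" "B \<subseteq> (if even j then Q else P)"
    using tree_leaves_side[OF bg _ ab(1)] tree_leaves_side[OF bipartite_swap[OF bg] _ ab(2)] by auto
  obtain a' b' seg where seg: "a' \<in> A" "b' \<in> B" "length seg = r - 1" "set seg \<subseteq> W"
      "distinct seg" "successively adj (a' # seg @ [b'])"
  proof (cases "even j")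
    case True
    then have "A \<subseteq> P" "B \<subseteq> Q" using leaves by simp_all
    then show thesis using that by (rule path_joining[OF bg dn fW _ _ cAB W(1,3,4) r])
  next
    case False
    then have "A \<subseteq> Q" "B \<subseteq> P" using leaves by simp_all
    moreover have "W \<subseteq> Q \<union> P" using W(1) by blast
    ultimately show thesis using that
      by (rule path_joining[OF bipartite_swap[OF bg] dense_between_swap[OF bg dn] fW _ _ cAB _
            W(4,3) r])
  qed
  have "\<forall>u v. adj u v \<longrightarrow> adj v u" using bg unfolding bipartite_def by blast
  moreover have "set seg \<inter> (Fa \<union> Fb) = {}" using seg(4) W(2) by blast
  ultimately obtain cyc where cyc: "length cyc = 2 * j + 2 + length seg" "is_cycle adj cyc"
    using twin_trees_close_cycle[OF _ tw ab(3) seg(1,2) _ seg(5,6)] by blast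
  have "length cyc = 2 * j + 1 + r" using cyc(1) seg(3) r(1) by (simp add: odd_pos)
  then show thesis using that cyc(2) by blast
qed

lemma dense_between_even_cycle:
  assumes bg: "bipartite adj P Q" and fP: "finite P" and fQ: "finite Q"
    and dn: "dense_between adj M P Q" and cP: "81 * M \<le> card P" and cQ: "81 * M \<le> card Q"
    and k: "1 \<le> k" "M \<le> 2 ^ (k - 1)" "2 * k \<le> M"
  obtains cyc where "length cyc = 2 * k" "is_cycle adj cyc"
proof -
  have M1: "1 \<le> M" using k by linarith
  have fV: "finite (P \<union> Q)" using fP fQ by blast
  obtain R where R: "R \<subseteq> P \<union> Q" "card R < 2 * M" "expands adj M (P \<union> Q) R"
    using expanding_outside_small_set[OF bg fP fQ dn cP cQ _ M1] by auto
  have fR: "finite R" using R(1) fV finite_subset by blast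
  have "M \<le> card (P - R)" "M \<le> card (Q - R)"
    using le_card_Diff[OF fR] cP cQ R(2) by simp_all
  then have "\<exists>a\<in>P - R. \<exists>b\<in>Q - R. adj a b"
    using dense_between_no_edges[OF dn Diff_subset Diff_subset] by (meson not_le)
  then obtain a b where ab: "a \<in> P - R" "b \<in> Q - R" "adj a b" by blast
  obtain j A B Fa Fb where j: "j \<le> k - 1" and tw: "twin_trees adj (P \<union> Q - R) a b j A B Fa Fb"
      and cAB: "card A = M" "card B = M" and cF: "card Fa \<le> 3 * M" "card Fb \<le> 3 * M"
    using twin_trees_exist[OF bg fV R(3) ab(1,2) M1 order_refl k(2)] by blast
  define X where "X = R \<union> Fa \<union> Fb"
  have "Fa \<subseteq> P \<union> Q" "Fb \<subseteq> P \<union> Q" using tw unfolding twin_trees_def by auto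
  then have fX: "finite X" unfolding X_def using fR fV finite_subset by blast
  have cX: "card X \<le> 8 * M"
    using card_Un_le[of "R \<union> Fa" Fb] card_Un_le[of R Fa] R(2) cF unfolding X_def by linarith
  define W where "W = P \<union> Q - X"
  have "73 * M \<le> card (P - X)" "73 * M \<le> card (Q - X)"
    using le_card_Diff[OF fX] cP cQ cX by simp_all
  moreover have "W \<inter> P = P - X" "W \<inter> Q = Q - X" unfolding W_def by auto
  ultimately have WP: "73 * M \<le> card (W \<inter> P)" and WQ: "73 * M \<le> card (W \<inter> Q)" by simp_all
  have W: "W \<subseteq> P \<union> Q" "W \<inter> (Fa \<union> Fb) = {}" "finite W" unfolding W_def X_def using fV by auto
  define r where "r = 2 * (k - 1 - j) + 1"
  have r: "odd r" "r \<le> M" unfolding r_def using k(1,3) by simp_all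
  have "a \<in> P" "b \<in> Q" "M \<le> card A" "M \<le> card B" using ab cAB by auto
  then obtain cyc where "length cyc = 2 * j + 1 + r" "is_cycle adj cyc"
    using twin_trees_cycle[OF bg dn W(3) tw _ _ ab(3) _ _ W(1,2) WP WQ r] by blast
  moreover have "2 * j + 1 + r = 2 * k" unfolding r_def using j k(1) by linarith
  ultimately show thesis using that by simp
qed

section \<open>Colourings of the complete bipartite graph\<close>

definition induced :: "('v \<Rightarrow> 'v \<Rightarrow> bool) \<Rightarrow> 'v set \<Rightarrow> 'v \<Rightarrow> 'v \<Rightarrow> bool" where
  "induced adj V u v \<longleftrightarrow> adj u v \<and> u \<in> V \<and> v \<in> V"

lemma col_adj_sym: "col_adj c b s u v \<Longrightarrow> col_adj c b s v u"
  unfolding col_adj_def by (cases u; cases v) auto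

lemma col_adj_Inl_Inr:
  "col_adj c b s u v \<Longrightarrow> (\<exists>x y. u = Inl x \<and> v = Inr y) \<or> (\<exists>x y. u = Inr y \<and> v = Inl x)"
  unfolding col_adj_def by (cases u; cases v) auto

lemma bipartite_induced_col_adj:
  "bipartite (induced (col_adj c b s) (Inl ` A \<union> Inr ` B)) (Inl ` A) (Inr ` B)"
  unfolding bipartite_def induced_def by (auto dest: col_adj_sym col_adj_Inl_Inr)

lemma is_cycle_induced: "is_cycle (induced adj V) cyc \<Longrightarrow> is_cycle adj cyc"
  unfolding is_cycle_def by (metis induced_def successively_mono)

lemma has_mono_cycle_if_is_cycle:
  assumes cyc: "is_cycle (col_adj c b k) cyc" and len: "3 \<le> length cyc"
  shows "has_mono_cycle c b k (length cyc)"
  unfolding has_mono_cycle_def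
proof (intro conjI exI[of _ "nth cyc"])
  have ne: "cyc \<noteq> []" using len by auto
  show "3 \<le> length cyc" by (fact len)
  show "inj_on (nth cyc) {..<length cyc}" using cyc unfolding is_cycle_def by (simp add: inj_on_nth)
  show "\<forall>j<length cyc. col_adj c b k (cyc ! j) (cyc ! (Suc j mod length cyc))"
  proof (intro allI impI)
    fix j assume j: "j < length cyc"
    show "col_adj c b k (cyc ! j) (cyc ! (Suc j mod length cyc))"
    proof (cases "Suc j < length cyc")
      case True
      then have "col_adj c b k (cyc ! j) (cyc ! Suc j)"
        using cyc successively_nth unfolding is_cycle_def by blast
      then show ?thesis using True by simp
    next
      case False
      then have "length cyc = Suc j" using j by simp
      then have "cyc ! j = last cyc" "cyc ! (Suc j mod length cyc) = hd cyc"
        using ne by (simp_all add: last_conv_nth hd_conv_nth)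
      then show ?thesis using cyc unfolding is_cycle_def by simp
    qed
  qed
qed

lemma has_mono_cycle_if_dense:
  assumes dn: "dense_between (induced (col_adj c b s) (Inl ` A \<union> Inr ` B)) M (Inl ` A) (Inr ` B)"
    and AB: "A \<subseteq> {..<b}" "B \<subseteq> {..<b}" "card A = 81 * M" "card B = 81 * M"
    and k: "1 \<le> k" "M \<le> 2 ^ (k - 1)" "2 * k \<le> M"
  shows "has_mono_cycle c b s (2 * k)"
proof -
  have "finite A" "finite B" using AB(1,2) finite_subset by blast+
  then have fin: "finite (Inl ` A :: (nat + nat) set)" "finite (Inr ` B :: (nat + nat) set)"
    by simp_all
  have "81 * M \<le> card (Inl ` A :: (nat + nat) set)" "81 * M \<le> card (Inr ` B :: (nat + nat) set)"
    using AB(3,4) by (simp_all add: card_image)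
  then obtain cyc where cyc: "length cyc = 2 * k"
      "is_cycle (induced (col_adj c b s) (Inl ` A \<union> Inr ` B)) cyc"
    using dense_between_even_cycle[OF bipartite_induced_col_adj fin dn _ _ k] by blast
  have "k \<noteq> 1" using k by auto
  then have "3 \<le> length cyc" using cyc(1) k(1) by linarith
  then show ?thesis using has_mono_cycle_if_is_cycle[OF is_cycle_induced[OF cyc(2)]] cyc(1) by simp
qed

lemma colour_gap_if_not_dense:
  assumes dn: "\<not> dense_between (induced (col_adj c b s) (Inl ` A \<union> Inr ` B)) M (Inl ` A) (Inr ` B)"
    and AB: "A \<subseteq> {..<b}" "B \<subseteq> {..<b}" and cs: "\<forall>x\<in>A. \<forall>y\<in>B. s \<le> c x y"
  obtains A' B' where "A' \<subseteq> A" "B' \<subseteq> B" "card A' = M" "card B' = M" "\<forall>x\<in>A'. \<forall>y\<in>B'. s < c x y"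
proof -
  obtain AA BB where AA: "AA \<subseteq> Inl ` A" "M \<le> card AA" and BB: "BB \<subseteq> Inr ` B" "M \<le> card BB"
      and no_edge: "\<forall>u\<in>AA. \<forall>v\<in>BB. \<not> induced (col_adj c b s) (Inl ` A \<union> Inr ` B) u v"
    using dn unfolding dense_between_def by blast
  have "card (Inl -` AA) = card AA" using AA(1) by (intro card_vimage_inj) auto
  then have "M \<le> card (Inl -` AA)" using AA(2) by simp
  then obtain A' where A': "A' \<subseteq> Inl -` AA" "card A' = M" by (meson obtain_subset_with_card_n)
  have "card (Inr -` BB) = card BB" using BB(1) by (intro card_vimage_inj) auto
  then have "M \<le> card (Inr -` BB)" using BB(2) by simp
  then obtain B' where B': "B' \<subseteq> Inr -` BB" "card B' = M" by (meson obtain_subset_with_card_n)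
  have sub: "A' \<subseteq> A" "B' \<subseteq> B" using A'(1) B'(1) AA(1) BB(1) by auto
  have "s < c x y" if "x \<in> A'" "y \<in> B'" for x y
  proof -
    have "\<not> induced (col_adj c b s) (Inl ` A \<union> Inr ` B) (Inl x) (Inr y)"
      using no_edge that A'(1) B'(1) by blast
    moreover have "x \<in> A" "y \<in> B" using that sub by blast+
    moreover have "x < b" "y < b" using calculation(2,3) AB by blast+
    ultimately have "c x y \<noteq> s" by (simp add: induced_def col_adj_def)
    moreover have "s \<le> c x y" using cs \<open>x \<in> A\<close> \<open>y \<in> B\<close> by blast
    ultimately show ?thesis by linarith
  qed
  then show thesis using that sub A'(2) B'(2) by blast
qed

lemma colour_step:
  fixes c :: "nat \<Rightarrow> nat \<Rightarrow> nat"
  assumes AB: "A \<subseteq> {..<b}" "B \<subseteq> {..<b}" "card A = 81 * M" "card B = 81 * M"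
    and cs: "\<forall>x\<in>A. \<forall>y\<in>B. s \<le> c x y" and k: "1 \<le> k" "M \<le> 2 ^ (k - 1)" "2 * k \<le> M"
  shows "has_mono_cycle c b s (2 * k) \<or>
    (\<exists>A' B'. A' \<subseteq> A \<and> B' \<subseteq> B \<and> card A' = M \<and> card B' = M \<and> (\<forall>x\<in>A'. \<forall>y\<in>B'. s < c x y))"
proof (cases "dense_between (induced (col_adj c b s) (Inl ` A \<union> Inr ` B)) M (Inl ` A) (Inr ` B)")
  case True
  show ?thesis by (rule disjI1, rule has_mono_cycle_if_dense[OF True AB k])
next
  case False
  obtain A' B' where "A' \<subseteq> A" "B' \<subseteq> B" "card A' = M" "card B' = M"
      "\<forall>x\<in>A'. \<forall>y\<in>B'. s < c x y"
    by (rule colour_gap_if_not_dense[OF False AB(1,2) cs])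
  then show ?thesis by blast
qed

lemma le_pow2_if_ceiling_log_le:
  fixes X k :: nat
  assumes X: "1 \<le> X" and h: "2 * \<lceil>log 2 (real X)\<rceil> + 1 \<le> int (2 * k)"
  shows "X \<le> 2 ^ (k - 1)"
proof -
  define L where "L = \<lceil>log 2 (real X)\<rceil>"
  have "2 * L + 1 \<le> 2 * int k" using h unfolding L_def by simp
  then have "L \<le> int k - 1" by presburger
  moreover have "log 2 (real X) \<le> of_int L" unfolding L_def by (rule le_of_int_ceiling)
  moreover have "0 \<le> log 2 (real X)" using X by simp
  ultimately have log_le: "log 2 (real X) \<le> real (k - 1)" by linarith
  have "real X = 2 powr log 2 (real X)" using X by simp
  also have "\<dots> \<le> 2 powr real (k - 1)" using log_le by (intro powr_mono) auto
  also have "\<dots> = real (2 ^ (k - 1))" by (simp add: powr_realpow)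
  finally show ?thesis by (simp only: of_nat_le_iff)
qed

lemma even_cycle_parameters:
  fixes n M X :: nat
  assumes n: "1 \<le> n" "even n" "n \<le> M" and X: "M \<le> X" "2 * \<lceil>log 2 (real X)\<rceil> + 1 \<le> int n"
  obtains k where "n = 2 * k" "1 \<le> k" "M \<le> 2 ^ (k - 1)" "2 * k \<le> M"
proof -
  obtain k where nk: "n = 2 * k" using n(2) by (rule evenE)
  have "1 \<le> X" using n(1,3) X(1) by linarith
  then have "X \<le> 2 ^ (k - 1)" using X(2) nk by (intro le_pow2_if_ceiling_log_le) simp_all
  then have "M \<le> 2 ^ (k - 1)" using X(1) by linarith
  moreover have "1 \<le> k" "2 * k \<le> M" using n(1,3) nk by simp_all
  ultimately show thesis using that nk by blast
qed

lemma colour_round: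
  fixes c :: "nat \<Rightarrow> nat \<Rightarrow> nat"
  assumes AB: "A \<subseteq> {..<b}" "B \<subseteq> {..<b}" "card A = 81 * M" "card B = 81 * M"
    and cs: "\<forall>x\<in>A. \<forall>y\<in>B. s \<le> c x y"
    and n: "1 \<le> n" "even n" "n \<le> M" "M \<le> X" "2 * \<lceil>log 2 (real X)\<rceil> + 1 \<le> int n"
  shows "has_mono_cycle c b s n \<or> (\<exists>A' B'. A' \<subseteq> {..<b} \<and> B' \<subseteq> {..<b} \<and>
    card A' = M \<and> card B' = M \<and> (\<forall>x\<in>A'. \<forall>y\<in>B'. Suc s \<le> c x y))"
proof -
  obtain k where nk: "n = 2 * k" and k: "1 \<le> k" "M \<le> 2 ^ (k - 1)" "2 * k \<le> M"
    by (rule even_cycle_parameters[OF n])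
  from colour_step[OF AB cs k] show ?thesis
  proof
    assume "has_mono_cycle c b s (2 * k)"
    then show ?thesis unfolding nk by blast
  next
    assume "\<exists>A' B'. A' \<subseteq> A \<and> B' \<subseteq> B \<and> card A' = M \<and> card B' = M \<and>
        (\<forall>x\<in>A'. \<forall>y\<in>B'. s < c x y)"
    then obtain A' B' where "A' \<subseteq> A" "B' \<subseteq> B" "card A' = M" "card B' = M"
        "\<forall>x\<in>A'. \<forall>y\<in>B'. Suc s \<le> c x y"
      by (metis Suc_le_eq)
    moreover have "A' \<subseteq> {..<b}" "B' \<subseteq> {..<b}" using calculation(1,2) AB(1,2) by blast+
    ultimately show ?thesis by blast
  qed
qed

lemma colour_rounds:
  fixes c :: "nat \<Rightarrow> nat \<Rightarrow> nat" and t m :: nat and n :: "nat \<Rightarrow> nat"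
  assumes hn: "\<forall>i<t. n i \<ge> 1 \<and> even (n i) \<and> m \<ge> n i \<and>
           int (n i) \<ge> 2 * \<lceil>log 2 (real (81 ^ (t - 1) * m))\<rceil> + 1"
    and s: "s \<le> t"
  shows "(\<exists>i<s. has_mono_cycle c (81 ^ t * m) i (n i)) \<or>
     (\<exists>A B. A \<subseteq> {..<81 ^ t * m} \<and> B \<subseteq> {..<81 ^ t * m} \<and>
        card A = 81 ^ (t - s) * m \<and> card B = 81 ^ (t - s) * m \<and> (\<forall>x\<in>A. \<forall>y\<in>B. s \<le> c x y))"
  using s
proof (induction s)
  case 0
  then show ?case by (intro disjI2 exI[of _ "{..<81 ^ t * m}"]) auto
next
  case (Suc s)
  have s: "s < t" using Suc.prems by simp
  define M where "M = 81 ^ (t - Suc s) * m"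
  have "t - s = Suc (t - Suc s)" using s by simp
  then have "81 ^ (t - s) * m = 81 * M" unfolding M_def by simp
  then have IH: "(\<exists>i<s. has_mono_cycle c (81 ^ t * m) i (n i)) \<or>
     (\<exists>A B. A \<subseteq> {..<81 ^ t * m} \<and> B \<subseteq> {..<81 ^ t * m} \<and>
        card A = 81 * M \<and> card B = 81 * M \<and> (\<forall>x\<in>A. \<forall>y\<in>B. s \<le> c x y))"
    using Suc.IH s by simp
  show ?case
  proof (cases "\<exists>i<s. has_mono_cycle c (81 ^ t * m) i (n i)")
    case True
    then show ?thesis using less_SucI by blast
  next
    case False
    then obtain A B where AB: "A \<subseteq> {..<81 ^ t * m}" "B \<subseteq> {..<81 ^ t * m}"
        "card A = 81 * M" "card B = 81 * M" "\<forall>x\<in>A. \<forall>y\<in>B. s \<le> c x y"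
      using IH by blast
    have "81 ^ (t - Suc s) \<le> (81::nat) ^ (t - 1)" by (rule power_increasing) (use s in auto)
    then have MX: "M \<le> 81 ^ (t - 1) * m" unfolding M_def by simp
    have ns: "1 \<le> n s" "even (n s)" "n s \<le> m"
        "2 * \<lceil>log 2 (real (81 ^ (t - 1) * m))\<rceil> + 1 \<le> int (n s)"
      using hn s by simp_all
    have "m \<le> M" unfolding M_def by simp
    then have "n s \<le> M" using ns(3) by linarith
    from colour_round[OF AB ns(1,2) this MX ns(4)] show ?thesis
      unfolding M_def by (blast intro: less_SucI)
  qed
qed

lemma has_mono_Kmm_if_colours_ge:
  assumes AB: "A \<subseteq> {..<b}" "B \<subseteq> {..<b}" "card A = m" "card B = m"
    and ge: "\<forall>x\<in>A. \<forall>y\<in>B. k \<le> c x y" and le: "\<forall>x<b. \<forall>y<b. c x y \<le> k"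
  shows "has_mono_Kmm c b k m"
proof -
  have "\<forall>x\<in>A. \<forall>y\<in>B. c x y = k"
  proof (intro ballI)
    fix x y assume "x \<in> A" "y \<in> B"
    then have "x < b" "y < b" "k \<le> c x y" using AB(1,2) ge by auto
    then show "c x y = k" using le by (simp add: le_antisym)
  qed
  then show ?thesis unfolding has_mono_Kmm_def using AB by blast
qed

theorem corollary2p5:
  fixes t m :: nat and n :: "nat \<Rightarrow> nat"
  assumes "t \<ge> 1" and "m \<ge> 1"
    and "\<forall>i<t. n i \<ge> 1 \<and> even (n i) \<and> m \<ge> n i \<and>
           int (n i) \<ge> 2 * \<lceil>log 2 (real (81 ^ (t - 1) * m))\<rceil> + 1"
  shows "BR_cycles_Kmm t n m \<le> 81 ^ t * m"
proof -
  have "BR_arrows t n m (81 ^ t * m)"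
    unfolding BR_arrows_def
  proof (intro allI impI)
    fix c :: "nat \<Rightarrow> nat \<Rightarrow> nat"
    assume bounded: "\<forall>x<81 ^ t * m. \<forall>y<81 ^ t * m. c x y \<le> t"
    from colour_rounds[OF assms(3) order_refl, of c]
    show "(\<exists>i<t. has_mono_cycle c (81 ^ t * m) i (n i)) \<or> has_mono_Kmm c (81 ^ t * m) t m"
    proof
      assume "\<exists>A B. A \<subseteq> {..<81 ^ t * m} \<and> B \<subseteq> {..<81 ^ t * m} \<and>
          card A = 81 ^ (t - t) * m \<and> card B = 81 ^ (t - t) * m \<and> (\<forall>x\<in>A. \<forall>y\<in>B. t \<le> c x y)"
      then obtain A B where "A \<subseteq> {..<81 ^ t * m}" "B \<subseteq> {..<81 ^ t * m}" "card A = m" "card B = m"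
          "\<forall>x\<in>A. \<forall>y\<in>B. t \<le> c x y"
        by auto
      then have "has_mono_Kmm c (81 ^ t * m) t m" using bounded by (rule has_mono_Kmm_if_colours_ge)
      then show ?thesis ..
    qed blast
  qed
  then show ?thesis unfolding BR_cycles_Kmm_def by (rule Least_le)
qed

end
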